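(* Consider an instance of the max-min fair curriculum-based course timetabling (MMF-CB-CTT) problem with set of courses $C$, set of rooms $R$, set of periods $P$ and curricula $U\subseteq\mathcal{P}(C)$. Fix a period $p\in P$ and a feasible timetable in which the set $C_p$ of courses scheduled in $p$ is fixed, and everything except the rooms of the courses in $C_p$ is fixed; assume (adding dummy courses or dummy rooms if necessary) $|C_p|=|R|$. For $e\in C_p$ let $U_e=\{u\in U: e\in u\}$, and for $r\in R$ and $u\in U_e$ let $c_{e\to r}(u)$ denote the penalty $c(u,\tau)$ of curriculum $u$ in the completed timetable $\tau$ when $e$ is assigned to room $r$. Then the problem of choosing the room assignment for the courses of $C_p$ so that the resulting allocation vector is max-min fair (among all room assignments for period $p$ with the rest fixed) is equivalent to the GLBOP whose ground set is the edge set $E=\{\{e,r\}: e\in C_p, r\in R\}$ of the complete bipartite graph on $C_p\cup R$, whose feasible solutions are the perfect matchings of this graph, and whose weights are the multisets $w(e,r)=\biguplus_{u\in U_e}\{c_{e\to r}(u)\}$; i.e. the room assignment subproblem is $$\min_{\preceq}\ \biguplus_{\{e,r\}\in S} w(e,r)\quad\text{s.t. } S \text{ a perfect matching}.$$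
   Context: CB-CTT: courses consist of events to be assigned to resources (period, room); each curriculum is a set of courses no two of which may be taught in the same period (hard constraint), so each curriculum contains at most one course of $C_p$. The penalty $c(u,\tau)=\sum_{i=1}^4 c_{Si}(u,\tau)$ of curriculum $u$ in timetable $\tau$ is the CB-CTT objective (sum of weighted penalties for soft constraints RoomCapacity, MinWorkingDays, IsolatedLectures, RoomStability) restricted to events of courses in $u$. The allocation vector of $\tau$ is $A(\tau)=(c(u_1,\tau),\dots,c(u_k,\tau))$ for curricula $u_1,\dots,u_k$; $\tau$ is max-min fair if $A(\tau)$ sorted non-increasingly is lexicographically minimal among feasible timetables. GLBOP and the comparison $\preceq$ of multisets: sort the multisets non-increasingly and compare the sequences lexicographically, where a proper prefix is smaller; the GLBOP asks for a feasible solution $S$ minimizing $\biguplus_{e\in S}w(e)$ with respect to $\preceq$. *)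

theory Defs
  imports Main "HOL-Library.Multiset"
begin

section \<open>CB-CTT instances (ITC-2007 track 3 formulation)\<close>

text \<open>Periods are the naturals 0 ..< days*slots; period q lies on day q div slots.\<close>

record ('c, 'r, 't) cbctt =
  courses   :: "'c set"
  rooms     :: "'r set"
  days      :: nat
  slots     :: nat
  curricula :: "'c set set"
  lectures  :: "'c \<Rightarrow> nat"
  students  :: "'c \<Rightarrow> nat"
  min_days  :: "'c \<Rightarrow> nat"
  teacher   :: "'c \<Rightarrow> 't"
  unavail   :: "'c \<Rightarrow> nat set"
  capacity  :: "'r \<Rightarrow> nat"

type_synonym ('c, 'r) timetable = "'c \<times> nat \<Rightarrow> nat \<times> 'r"

definition wf_inst :: "('c, 'r, 't) cbctt \<Rightarrow> bool" where
  "wf_inst I \<longleftrightarrow> finite (courses I) \<and> finite (rooms I) \<and> curricula I \<subseteq> Pow (courses I)"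

definition periods :: "('c, 'r, 't) cbctt \<Rightarrow> nat set" where
  "periods I = {..< days I * slots I}"

definition events :: "('c, 'r, 't) cbctt \<Rightarrow> ('c \<times> nat) set" where
  "events I = {(c, i). c \<in> courses I \<and> i < lectures I c}"

abbreviation per :: "('c, 'r) timetable \<Rightarrow> 'c \<times> nat \<Rightarrow> nat" where
  "per \<tau> ev \<equiv> fst (\<tau> ev)"

abbreviation room :: "('c, 'r) timetable \<Rightarrow> 'c \<times> nat \<Rightarrow> 'r" where
  "room \<tau> ev \<equiv> snd (\<tau> ev)"

text \<open>Hard constraints: Lectures, RoomOccupancy, Conflicts, Availability.\<close>
definition feasible :: "('c, 'r, 't) cbctt \<Rightarrow> ('c, 'r) timetable \<Rightarrow> bool" where
  "feasible I \<tau> \<longleftrightarrow>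
     (\<forall>ev \<in> events I. per \<tau> ev \<in> periods I \<and> room \<tau> ev \<in> rooms I) \<and>
     (\<forall>c i j. i < lectures I c \<and> j < lectures I c \<and> i \<noteq> j \<and> c \<in> courses I
              \<longrightarrow> per \<tau> (c, i) \<noteq> per \<tau> (c, j)) \<and>
     (\<forall>ev \<in> events I. \<forall>ev' \<in> events I. ev \<noteq> ev' \<longrightarrow> \<tau> ev \<noteq> \<tau> ev') \<and>
     (\<forall>(c, i) \<in> events I. \<forall>(c', j) \<in> events I. c \<noteq> c' \<and>
         ((\<exists>u \<in> curricula I. c \<in> u \<and> c' \<in> u) \<or> teacher I c = teacher I c')
         \<longrightarrow> per \<tau> (c, i) \<noteq> per \<tau> (c', j)) \<and>
     (\<forall>(c, i) \<in> events I. per \<tau> (c, i) \<notin> unavail I c)"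

text \<open>Soft constraints, restricted to a course / curriculum, with the standard weights
  RoomCapacity 1, MinWorkingDays 5, IsolatedLectures 2, RoomStability 1.\<close>

definition room_cap_pen :: "('c, 'r, 't) cbctt \<Rightarrow> ('c, 'r) timetable \<Rightarrow> 'c \<Rightarrow> nat" where
  "room_cap_pen I \<tau> c = (\<Sum>i<lectures I c. students I c - capacity I (room \<tau> (c, i)))"

definition min_days_pen :: "('c, 'r, 't) cbctt \<Rightarrow> ('c, 'r) timetable \<Rightarrow> 'c \<Rightarrow> nat" where
  "min_days_pen I \<tau> c = min_days I c - card ((\<lambda>i. per \<tau> (c, i) div slots I) ` {..<lectures I c})"

definition room_stab_pen :: "('c, 'r, 't) cbctt \<Rightarrow> ('c, 'r) timetable \<Rightarrow> 'c \<Rightarrow> nat" where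
  "room_stab_pen I \<tau> c = card ((\<lambda>i. room \<tau> (c, i)) ` {..<lectures I c}) - 1"

definition isolated_pen :: "('c, 'r, 't) cbctt \<Rightarrow> ('c, 'r) timetable \<Rightarrow> 'c set \<Rightarrow> nat" where
  "isolated_pen I \<tau> u =
     (\<Sum>c\<in>u. card {i. i < lectures I c \<and>
        \<not> (\<exists>c' \<in> u. \<exists>j < lectures I c'.
              per \<tau> (c', j) div slots I = per \<tau> (c, i) div slots I \<and>
              (per \<tau> (c', j) + 1 = per \<tau> (c, i) \<or> per \<tau> (c, i) + 1 = per \<tau> (c', j)))})"

definition cur_pen :: "('c, 'r, 't) cbctt \<Rightarrow> ('c, 'r) timetable \<Rightarrow> 'c set \<Rightarrow> nat" where
  "cur_pen I \<tau> u =
     (\<Sum>c\<in>u. 1 * room_cap_pen I \<tau> c + 5 * min_days_pen I \<tau> c + 1 * room_stab_pen I \<tau> c)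
     + 2 * isolated_pen I \<tau> u"

text \<open>Allocation vector (as the multiset of its entries; only its sorted version matters).\<close>
definition alloc :: "('c, 'r, 't) cbctt \<Rightarrow> ('c, 'r) timetable \<Rightarrow> nat multiset" where
  "alloc I \<tau> = image_mset (cur_pen I \<tau>) (mset_set (curricula I))"

text \<open>Lexicographic comparison of sequences, a proper prefix being smaller.\<close>
definition lex_le :: "nat list \<Rightarrow> nat list \<Rightarrow> bool" where
  "lex_le xs ys \<longleftrightarrow> xs = ys \<or> (xs, ys) \<in> lexord {(a, b). a < b}"

definition sort_desc :: "nat multiset \<Rightarrow> nat list" where
  "sort_desc M = rev (sorted_list_of_multiset M)"

definition mset_preceq :: "nat multiset \<Rightarrow> nat multiset \<Rightarrow> bool" where
  "mset_preceq M N \<longleftrightarrow> lex_le (sort_desc M) (sort_desc N)"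

definition max_min_fair ::
  "('c, 'r, 't) cbctt \<Rightarrow> ('c, 'r) timetable set \<Rightarrow> ('c, 'r) timetable \<Rightarrow> bool" where
  "max_min_fair I F \<tau> \<longleftrightarrow> \<tau> \<in> F \<and>
     (\<forall>\<tau>' \<in> F. lex_le (sort_desc (alloc I \<tau>)) (sort_desc (alloc I \<tau>')))"

definition glbop_opt :: "'e set set \<Rightarrow> ('e \<Rightarrow> nat multiset) \<Rightarrow> 'e set \<Rightarrow> bool" where
  "glbop_opt Feas w S \<longleftrightarrow> S \<in> Feas \<and>
     (\<forall>S' \<in> Feas. mset_preceq (\<Sum>e\<in>S. w e) (\<Sum>e\<in>S'. w e))"

text \<open>Perfect matchings of the complete bipartite graph on A \<union> B; an edge {a,b} is
  represented by the pair (a,b).\<close>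
definition perfect_matchings :: "'a set \<Rightarrow> 'b set \<Rightarrow> ('a \<times> 'b) set set" where
  "perfect_matchings A B = {S. S \<subseteq> A \<times> B \<and>
      (\<forall>a\<in>A. \<exists>!b. (a, b) \<in> S) \<and> (\<forall>b\<in>B. \<exists>!a. (a, b) \<in> S)}"

definition courses_at :: "('c, 'r, 't) cbctt \<Rightarrow> ('c, 'r) timetable \<Rightarrow> nat \<Rightarrow> 'c set" where
  "courses_at I \<tau> p = {c. \<exists>i. (c, i) \<in> events I \<and> per \<tau> (c, i) = p}"

definition room_nbhd ::
  "('c, 'r, 't) cbctt \<Rightarrow> ('c, 'r) timetable \<Rightarrow> nat \<Rightarrow> ('c, 'r) timetable set" where
  "room_nbhd I \<tau>0 p = {\<tau>. feasible I \<tau> \<and> (\<forall>ev. per \<tau> ev = per \<tau>0 ev) \<and>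
      (\<forall>ev. ev \<notin> events I \<or> per \<tau>0 ev \<noteq> p \<longrightarrow> \<tau> ev = \<tau>0 ev)}"

definition matching_of ::
  "('c, 'r, 't) cbctt \<Rightarrow> ('c, 'r) timetable \<Rightarrow> nat \<Rightarrow> ('c, 'r) timetable \<Rightarrow> ('c \<times> 'r) set" where
  "matching_of I \<tau>0 p \<tau> = {(c, room \<tau> (c, i)) | c i. (c, i) \<in> events I \<and> per \<tau>0 (c, i) = p}"

definition assign_room ::
  "('c, 'r) timetable \<Rightarrow> nat \<Rightarrow> 'c \<Rightarrow> 'r \<Rightarrow> ('c, 'r) timetable" where
  "assign_room \<tau>0 p e r = (\<lambda>ev. if fst ev = e \<and> per \<tau>0 ev = p then (p, r) else \<tau>0 ev)"

definition room_weight ::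
  "('c, 'r, 't) cbctt \<Rightarrow> ('c, 'r) timetable \<Rightarrow> nat \<Rightarrow> 'c \<times> 'r \<Rightarrow> nat multiset" where
  "room_weight I \<tau>0 p = (\<lambda>(e, r).
     image_mset (\<lambda>u. cur_pen I (assign_room \<tau>0 p e r) u)
                (mset_set {u \<in> curricula I. e \<in> u}))"

end

theory Submission
  imports Defs "HOL-Library.Multiset_Order"
begin

text \<open>Two courses of a curriculum never share a period, so every curriculum contains at most
  one course of \<open>C\<^sub>p\<close>. When only the rooms of period \<open>p\<close> vary, the curricula therefore
  split into those disjoint from \<open>C\<^sub>p\<close>, whose penalties stay constant, and, for each
  \<open>e \<in> C\<^sub>p\<close>, those containing \<open>e\<close>, whose penalties depend only on the room \<open>r\<close> of \<open>e\<close>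
  and make up the weight \<open>w(e,r)\<close>. So the allocation multiset is a constant plus the total
  weight of the induced assignment. Room occupancy makes these assignments injective, hence,
  as \<open>|C\<^sub>p| = |R|\<close>, exactly the perfect matchings. Finally, comparing non-increasingly sorted
  vectors lexicographically is the Dershowitz--Manna multiset order, which is cancellative, so
  max-min fairness turns into GLBOP optimality.\<close>

lemma sort_desc_eqI:
  assumes "sorted_wrt (\<ge>) xs" and "mset xs = M"
  shows "sort_desc M = xs"
proof -
  have "sorted_list_of_multiset M = sort (rev xs)"
    using assms(2) by (metis mset_rev sorted_list_of_multiset_mset)
  also have "\<dots> = rev xs"
    using assms(1) by (simp add: sorted_wrt_rev sorted_sort_id)
  finally show ?thesis
    by (simp add: sort_desc_def)
qed

lemma mset_sort_desc [simp]: "mset (sort_desc M) = M"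
  by (simp add: sort_desc_def)

lemma sort_desc_empty [simp]: "sort_desc {#} = []"
  by (simp add: sort_desc_def)

lemma sort_desc_Max:
  assumes "M \<noteq> {#}"
  shows "sort_desc M = Max_mset M # sort_desc (M - {#Max_mset M#})"
proof (rule sort_desc_eqI)
  have "\<forall>y \<in> set (sort_desc (M - {#Max_mset M#})). y \<le> Max_mset M"
    by (metis in_diffD mset_sort_desc set_mset_mset Max_ge finite_set_mset)
  then show "sorted_wrt (\<ge>) (Max_mset M # sort_desc (M - {#Max_mset M#}))"
    by (simp add: sort_desc_def sorted_wrt_rev)
  show "mset (Max_mset M # sort_desc (M - {#Max_mset M#})) = M"
    using assms by simp
qed

lemma lex_le_Nil [simp]: "lex_le [] ys"
  by (cases ys) (auto simp: lex_le_def)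

lemma lex_le_Cons_Nil [simp]: "\<not> lex_le (x # xs) []"
  by (simp add: lex_le_def)

lemma lex_le_Cons_Cons [simp]:
  "lex_le (x # xs) (y # ys) \<longleftrightarrow> x < y \<or> x = y \<and> lex_le xs ys"
  by (auto simp: lex_le_def)

lemma less_eq_multiset_iff_Max:
  fixes M N :: "'a::linorder multiset"
  assumes "M \<noteq> {#}" and "N \<noteq> {#}"
  shows "M \<le> N \<longleftrightarrow> Max_mset M < Max_mset N \<or>
    Max_mset M = Max_mset N \<and> M - {#Max_mset M#} \<le> N - {#Max_mset N#}"
proof (cases "Max_mset M" "Max_mset N" rule: linorder_cases)
  case less
  then show ?thesis
    using Max_lt_imp_lt_mset[OF assms(2) less] by simp
next
  case equal
  have "M \<le> N \<longleftrightarrow> M - {#Max_mset M#} + {#Max_mset M#} \<le> N - {#Max_mset N#} + {#Max_mset N#}"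
    using assms by simp
  with equal show ?thesis
    by (simp only: add_le_cancel_right) simp
next
  case greater
  then show ?thesis
    using Max_lt_imp_lt_mset[OF assms(1) greater] by auto
qed

lemma lex_le_sort_desc_iff: "lex_le (sort_desc M) (sort_desc N) \<longleftrightarrow> M \<le> N"
proof (induction "size M" arbitrary: M N rule: less_induct)
  case less
  show ?case
  proof (cases "M = {#} \<or> N = {#}")
    case True
    then show ?thesis
      by (cases "M = {#}") (auto simp: sort_desc_Max)
  next
    case False
    then have "size (M - {#Max_mset M#}) < size M"
      by (simp add: size_Diff1_less)
    with False less show ?thesis
      by (simp add: sort_desc_Max less_eq_multiset_iff_Max)
  qed
qed

lemma mset_preceq_iff_le: "mset_preceq M N \<longleftrightarrow> M \<le> N"
  by (simp add: mset_preceq_def lex_le_sort_desc_iff)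

lemma cur_pen_cong:
  assumes "\<And>c i. c \<in> u \<Longrightarrow> i < lectures I c \<Longrightarrow> \<tau> (c, i) = \<tau>' (c, i)"
  shows "cur_pen I \<tau> u = cur_pen I \<tau>' u"
proof -
  have "room_cap_pen I \<tau> c = room_cap_pen I \<tau>' c" "min_days_pen I \<tau> c = min_days_pen I \<tau>' c"
    "room_stab_pen I \<tau> c = room_stab_pen I \<tau>' c" if "c \<in> u" for c
    using assms[OF that] unfolding room_cap_pen_def min_days_pen_def room_stab_pen_def
    by (auto intro!: sum.cong image_cong arg_cong[where f = card])
  moreover have "isolated_pen I \<tau> u = isolated_pen I \<tau>' u"
    unfolding isolated_pen_def
    by (intro sum.cong refl arg_cong[where f = card] Collect_cong conj_cong)
      (metis (no_types, lifting) assms)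
  ultimately show ?thesis
    unfolding cur_pen_def by (simp cong: sum.cong)
qed

lemma image_mset_mset_set_eq_sum: "image_mset f (mset_set A) = (\<Sum>x\<in>A. {#f x#})"
  by (simp add: sum_unfold_sum_mset)

lemma graph_in_perfect_matchings:
  assumes "bij_betw f A B"
  shows "(\<lambda>a. (a, f a)) ` A \<in> perfect_matchings A B"
  using assms unfolding perfect_matchings_def bij_betw_def inj_on_def by auto

lemma perfect_matchings_eq_graphs:
  "perfect_matchings A B = (\<lambda>f. (\<lambda>a. (a, f a)) ` A) ` {f. bij_betw f A B}"
proof
  show "(\<lambda>f. (\<lambda>a. (a, f a)) ` A) ` {f. bij_betw f A B} \<subseteq> perfect_matchings A B"
    using graph_in_perfect_matchings by blast
  show "perfect_matchings A B \<subseteq> (\<lambda>f. (\<lambda>a. (a, f a)) ` A) ` {f. bij_betw f A B}"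
  proof
    fix S assume S: "S \<in> perfect_matchings A B"
    define f where "f a = (THE b. (a, b) \<in> S)" for a
    have unique: "\<exists>!b. (a, b) \<in> S" if "a \<in> A" for a
      using S that unfolding perfect_matchings_def by blast
    have S_iff: "(a, b) \<in> S \<longleftrightarrow> a \<in> A \<and> b = f a" for a b
    proof
      assume ab: "(a, b) \<in> S"
      then have "a \<in> A"
        using S unfolding perfect_matchings_def by blast
      with ab show "a \<in> A \<and> b = f a"
        unfolding f_def using the1_equality[OF unique] by metis
    next
      assume "a \<in> A \<and> b = f a"
      then show "(a, b) \<in> S"
        unfolding f_def using theI'[OF unique] by blast
    qed
    then have "S = (\<lambda>a. (a, f a)) ` A"
      by auto
    moreover have "bij_betw f A B"
    proof (rule bij_betwI')
      show "f a = f a' \<longleftrightarrow> a = a'" if "a \<in> A" "a' \<in> A" for a a'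
        using S that S_iff[of a "f a"] S_iff[of a' "f a"] unfolding perfect_matchings_def by blast
      show "f a \<in> B" if "a \<in> A" for a
        using S that S_iff[of a "f a"] unfolding perfect_matchings_def by blast
      show "\<exists>a \<in> A. b = f a" if "b \<in> B" for b
        using S that S_iff unfolding perfect_matchings_def by blast
    qed
    ultimately show "S \<in> (\<lambda>f. (\<lambda>a. (a, f a)) ` A) ` {f. bij_betw f A B}"
      by blast
  qed
qed

lemma feasible_lecture_periods_inj:
  assumes "feasible I \<tau>" "(c, i) \<in> events I" "(c, j) \<in> events I" "per \<tau> (c, i) = per \<tau> (c, j)"
  shows "i = j"
proof -
  have "\<forall>c i j. i < lectures I c \<and> j < lectures I c \<and> i \<noteq> j \<and> c \<in> courses I
          \<longrightarrow> per \<tau> (c, i) \<noteq> per \<tau> (c, j)"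
    using assms(1) unfolding feasible_def by simp
  then show ?thesis
    using assms(2-) unfolding events_def by blast
qed

lemma feasible_curriculum_conflict:
  assumes "feasible I \<tau>" "u \<in> curricula I" "c \<in> u" "c' \<in> u"
    "(c, i) \<in> events I" "(c', j) \<in> events I" "per \<tau> (c, i) = per \<tau> (c', j)"
  shows "c = c'"
proof -
  have "\<forall>(c, i) \<in> events I. \<forall>(c', j) \<in> events I. c \<noteq> c' \<and>
         ((\<exists>u \<in> curricula I. c \<in> u \<and> c' \<in> u) \<or> teacher I c = teacher I c')
         \<longrightarrow> per \<tau> (c, i) \<noteq> per \<tau> (c', j)"
    using assms(1) unfolding feasible_def by simp
  then show ?thesis
    using assms(2-) by fastforce
qed

lemma feasible_room_in_rooms:
  "feasible I \<tau> \<Longrightarrow> ev \<in> events I \<Longrightarrow> room \<tau> ev \<in> rooms I"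
  unfolding feasible_def by simp

lemma feasible_events_inj:
  "feasible I \<tau> \<Longrightarrow> ev \<in> events I \<Longrightarrow> ev' \<in> events I \<Longrightarrow> \<tau> ev = \<tau> ev' \<Longrightarrow> ev = ev'"
  unfolding feasible_def by blast

lemma feasible_reassign_rooms:
  assumes "feasible I \<tau>0"
    and "\<And>ev. per \<tau> ev = per \<tau>0 ev"
    and "\<And>ev. ev \<in> events I \<Longrightarrow> room \<tau> ev \<in> rooms I"
    and "\<And>ev ev'. ev \<in> events I \<Longrightarrow> ev' \<in> events I \<Longrightarrow> ev \<noteq> ev' \<Longrightarrow> \<tau> ev \<noteq> \<tau> ev'"
  shows "feasible I \<tau>"
  using assms unfolding feasible_def by (simp add: Ball_def)

locale period_room_assignment =
  fixes I :: "('c, 'r, 't) cbctt" and \<tau>0 :: "('c, 'r) timetable" and p :: nat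
  assumes wf: "wf_inst I" and feasible0: "feasible I \<tau>0"
begin

abbreviation Cp :: "'c set" where
  "Cp \<equiv> courses_at I \<tau>0 p"

abbreviation nbhd :: "('c, 'r) timetable set" where
  "nbhd \<equiv> room_nbhd I \<tau>0 p"

lemma finite_curricula: "finite (curricula I)"
  using wf unfolding wf_inst_def by (meson finite_Pow_iff finite_subset)

lemma finite_courses_at: "finite Cp"
proof -
  have "Cp \<subseteq> courses I"
    unfolding courses_at_def events_def by auto
  then show ?thesis
    using wf finite_subset unfolding wf_inst_def by blast
qed

lemma courses_atI: "(c, i) \<in> events I \<Longrightarrow> per \<tau>0 (c, i) = p \<Longrightarrow> c \<in> Cp"
  unfolding courses_at_def by blast

lemma curriculum_meets_courses_at_once:
  assumes "u \<in> curricula I" "c \<in> u" "c' \<in> u" "c \<in> Cp" "c' \<in> Cp"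
  shows "c = c'"
proof -
  obtain i j where "(c, i) \<in> events I" "per \<tau>0 (c, i) = p" "(c', j) \<in> events I" "per \<tau>0 (c', j) = p"
    using assms(4,5) unfolding courses_at_def by blast
  then show ?thesis
    using feasible_curriculum_conflict[OF feasible0 assms(1-3)] by simp
qed

definition lecture_at :: "'c \<Rightarrow> nat" where
  "lecture_at c = (THE i. (c, i) \<in> events I \<and> per \<tau>0 (c, i) = p)"

lemma lecture_at_eq:
  assumes "(c, i) \<in> events I" "per \<tau>0 (c, i) = p"
  shows "lecture_at c = i"
  unfolding lecture_at_def
  using assms feasible_lecture_periods_inj[OF feasible0] by (intro the_equality) auto

lemma lecture_at:
  assumes "c \<in> Cp"
  shows "(c, lecture_at c) \<in> events I" "per \<tau>0 (c, lecture_at c) = p"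
  using assms lecture_at_eq unfolding courses_at_def by auto

definition room_at :: "('c, 'r) timetable \<Rightarrow> 'c \<Rightarrow> 'r" where
  "room_at \<tau> c = room \<tau> (c, lecture_at c)"

lemma matching_of_eq: "matching_of I \<tau>0 p \<tau> = (\<lambda>c. (c, room_at \<tau> c)) ` Cp"
  unfolding matching_of_def room_at_def courses_at_def using lecture_at_eq by fastforce

lemma room_nbhd_outside:
  assumes "\<tau> \<in> nbhd" "c \<notin> Cp"
  shows "\<tau> (c, i) = \<tau>0 (c, i)"
  using assms courses_atI unfolding room_nbhd_def by blast

lemma room_nbhd_at_period:
  assumes "\<tau> \<in> nbhd" "(c, i) \<in> events I"
  shows "\<tau> (c, i) = (if per \<tau>0 (c, i) = p then (p, room_at \<tau> c) else \<tau>0 (c, i))"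
  using assms lecture_at_eq unfolding room_nbhd_def room_at_def by (auto simp: prod_eq_iff)

lemma bij_betw_room_at:
  assumes "card Cp = card (rooms I)" "\<tau> \<in> nbhd"
  shows "bij_betw (room_at \<tau>) Cp (rooms I)"
proof -
  have feasible: "feasible I \<tau>" and per_eq: "\<And>ev. per \<tau> ev = per \<tau>0 ev"
    using assms(2) unfolding room_nbhd_def by auto
  have inj: "inj_on (room_at \<tau>) Cp"
  proof (rule inj_onI)
    fix c c' assume c: "c \<in> Cp" "c' \<in> Cp" and "room_at \<tau> c = room_at \<tau> c'"
    then have "\<tau> (c, lecture_at c) = \<tau> (c', lecture_at c')"
      using per_eq lecture_at unfolding room_at_def by (metis prod_eq_iff)
    then show "c = c'"
      using feasible_events_inj[OF feasible lecture_at(1)[OF c(1)] lecture_at(1)[OF c(2)]] by simp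
  qed
  moreover have "room_at \<tau> ` Cp \<subseteq> rooms I"
    using feasible_room_in_rooms[OF feasible] lecture_at unfolding room_at_def by blast
  moreover have "finite (rooms I)"
    using wf unfolding wf_inst_def by blast
  ultimately show ?thesis
    using assms(1) card_image card_subset_eq unfolding bij_betw_def by metis
qed

definition reassign :: "('c \<Rightarrow> 'r) \<Rightarrow> ('c, 'r) timetable" where
  "reassign f ev = (if ev \<in> events I \<and> per \<tau>0 ev = p then (p, f (fst ev)) else \<tau>0 ev)"

lemma room_at_reassign: "c \<in> Cp \<Longrightarrow> room_at (reassign f) c = f c"
  using lecture_at unfolding room_at_def reassign_def by simp

lemma reassign_in_room_nbhd:
  assumes "inj_on f Cp" "f ` Cp \<subseteq> rooms I"
  shows "reassign f \<in> nbhd"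
proof -
  have per_eq: "per (reassign f) ev = per \<tau>0 ev" for ev
    unfolding reassign_def by simp
  have "feasible I (reassign f)"
  proof (rule feasible_reassign_rooms[OF feasible0 per_eq])
    show "room (reassign f) ev \<in> rooms I" if "ev \<in> events I" for ev
      using feasible_room_in_rooms[OF feasible0 that] that assms(2) courses_atI
      unfolding reassign_def by (cases ev) auto
    show "reassign f ev \<noteq> reassign f ev'"
      if ev: "ev \<in> events I" "ev' \<in> events I" "ev \<noteq> ev'" for ev ev'
    proof
      assume eq: "reassign f ev = reassign f ev'"
      then have same_period: "per \<tau>0 ev = per \<tau>0 ev'"
        using per_eq by metis
      obtain c i c' i' where evs: "ev = (c, i)" "ev' = (c', i')"
        by (cases ev, cases ev')
      show False
      proof (cases "per \<tau>0 ev = p")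
        case True
        then have "c \<in> Cp" "c' \<in> Cp" "f c = f c'"
          using ev eq same_period courses_atI unfolding evs reassign_def by auto
        then have "c = c'"
          using assms(1) by (meson inj_onD)
        then show False
          using ev feasible_lecture_periods_inj[OF feasible0] True same_period unfolding evs by auto
      next
        case False
        then have "\<tau>0 ev = \<tau>0 ev'"
          using eq same_period unfolding reassign_def by auto
        then show False
          using feasible_events_inj[OF feasible0] ev by blast
      qed
    qed
  qed
  then show ?thesis
    unfolding room_nbhd_def using per_eq by (simp add: reassign_def)
qed

theorem perfect_matchings_eq_image_matching_of:
  assumes "card Cp = card (rooms I)"
  shows "perfect_matchings Cp (rooms I) = matching_of I \<tau>0 p ` nbhd"
proof
  show "perfect_matchings Cp (rooms I) \<subseteq> matching_of I \<tau>0 p ` nbhd"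
  proof
    fix S assume "S \<in> perfect_matchings Cp (rooms I)"
    then obtain f where f: "bij_betw f Cp (rooms I)" and S: "S = (\<lambda>c. (c, f c)) ` Cp"
      unfolding perfect_matchings_eq_graphs by blast
    have "matching_of I \<tau>0 p (reassign f) = S"
      unfolding matching_of_eq S using room_at_reassign by simp
    moreover have "reassign f \<in> nbhd"
      using f by (intro reassign_in_room_nbhd) (auto simp: bij_betw_def)
    ultimately show "S \<in> matching_of I \<tau>0 p ` nbhd"
      by blast
  qed
  show "matching_of I \<tau>0 p ` nbhd \<subseteq> perfect_matchings Cp (rooms I)"
    using bij_betw_room_at[OF assms] graph_in_perfect_matchings by (auto simp: matching_of_eq)
qed

lemma cur_pen_room_nbhd_untouched:
  assumes "\<tau> \<in> nbhd" "u \<inter> Cp = {}"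
  shows "cur_pen I \<tau> u = cur_pen I \<tau>0 u"
  using assms room_nbhd_outside by (intro cur_pen_cong) blast

lemma cur_pen_assign_room_at:
  assumes "\<tau> \<in> nbhd" "u \<in> curricula I" "c \<in> u" "c \<in> Cp"
  shows "cur_pen I (assign_room \<tau>0 p c (room_at \<tau> c)) u = cur_pen I \<tau> u"
proof (rule cur_pen_cong)
  fix c' i assume c': "c' \<in> u" and i: "i < lectures I c'"
  show "assign_room \<tau>0 p c (room_at \<tau> c) (c', i) = \<tau> (c', i)"
  proof (cases "c' = c")
    case True
    have "(c, i) \<in> events I"
      using wf assms(2,3) i True unfolding wf_inst_def events_def by auto
    then show ?thesis
      using assms(1) True by (simp add: room_nbhd_at_period assign_room_def)
  next
    case False
    then have "c' \<notin> Cp"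
      using curriculum_meets_courses_at_once assms(2-4) c' by blast
    then show ?thesis
      using assms(1) False room_nbhd_outside by (simp add: assign_room_def)
  qed
qed

lemma sum_room_weight_matching_of:
  assumes "\<tau> \<in> nbhd"
  shows "(\<Sum>x\<in>matching_of I \<tau>0 p \<tau>. room_weight I \<tau>0 p x)
    = (\<Sum>u\<in>{u \<in> curricula I. u \<inter> Cp \<noteq> {}}. {#cur_pen I \<tau> u#})"
proof -
  have "(\<Sum>x\<in>matching_of I \<tau>0 p \<tau>. room_weight I \<tau>0 p x)
      = (\<Sum>c\<in>Cp. room_weight I \<tau>0 p (c, room_at \<tau> c))"
    unfolding matching_of_eq by (subst sum.reindex) (auto intro: inj_onI)
  also have "\<dots> = (\<Sum>c\<in>Cp. \<Sum>u\<in>{u \<in> curricula I. c \<in> u}. {#cur_pen I \<tau> u#})"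
    using assms cur_pen_assign_room_at
    by (intro sum.cong refl) (simp add: room_weight_def image_mset_mset_set_eq_sum)
  also have "\<dots> = (\<Sum>u\<in>(\<Union>c\<in>Cp. {u \<in> curricula I. c \<in> u}). {#cur_pen I \<tau> u#})"
    using finite_courses_at finite_curricula curriculum_meets_courses_at_once
    by (intro sum.UNION_disjoint[symmetric]) auto
  also have "(\<Union>c\<in>Cp. {u \<in> curricula I. c \<in> u}) = {u \<in> curricula I. u \<inter> Cp \<noteq> {}}"
    by blast
  finally show ?thesis .
qed

lemma alloc_room_nbhd:
  assumes "\<tau> \<in> nbhd"
  shows "alloc I \<tau> = (\<Sum>u\<in>{u \<in> curricula I. u \<inter> Cp = {}}. {#cur_pen I \<tau>0 u#})
    + (\<Sum>x\<in>matching_of I \<tau>0 p \<tau>. room_weight I \<tau>0 p x)"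
proof -
  let ?untouched = "{u \<in> curricula I. u \<inter> Cp = {}}" and ?touched = "{u \<in> curricula I. u \<inter> Cp \<noteq> {}}"
  have "alloc I \<tau> = (\<Sum>u\<in>?untouched \<union> ?touched. {#cur_pen I \<tau> u#})"
    unfolding alloc_def image_mset_mset_set_eq_sum by (rule sum.cong) auto
  also have "\<dots> = (\<Sum>u\<in>?untouched. {#cur_pen I \<tau> u#}) + (\<Sum>u\<in>?touched. {#cur_pen I \<tau> u#})"
    using finite_curricula by (intro sum.union_disjoint) auto
  also have "(\<Sum>u\<in>?untouched. {#cur_pen I \<tau> u#}) = (\<Sum>u\<in>?untouched. {#cur_pen I \<tau>0 u#})"
    using assms cur_pen_room_nbhd_untouched by (intro sum.cong) auto
  finally show ?thesis
    using sum_room_weight_matching_of[OF assms] by simp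
qed

theorem max_min_fair_iff_glbop_opt:
  assumes "card Cp = card (rooms I)" "\<tau> \<in> nbhd"
  shows "max_min_fair I nbhd \<tau> \<longleftrightarrow>
    glbop_opt (perfect_matchings Cp (rooms I)) (room_weight I \<tau>0 p) (matching_of I \<tau>0 p \<tau>)"
proof -
  let ?W = "\<lambda>\<tau>. \<Sum>x\<in>matching_of I \<tau>0 p \<tau>. room_weight I \<tau>0 p x"
  have "max_min_fair I nbhd \<tau> \<longleftrightarrow> (\<forall>\<tau>' \<in> nbhd. alloc I \<tau> \<le> alloc I \<tau>')"
    using assms(2) by (simp add: max_min_fair_def lex_le_sort_desc_iff)
  also have "\<dots> \<longleftrightarrow> (\<forall>\<tau>' \<in> nbhd. ?W \<tau> \<le> ?W \<tau>')"
    using assms(2) by (simp add: alloc_room_nbhd)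
  also have "\<dots> \<longleftrightarrow> glbop_opt (perfect_matchings Cp (rooms I)) (room_weight I \<tau>0 p) (matching_of I \<tau>0 p \<tau>)"
    using assms by (simp add: glbop_opt_def mset_preceq_iff_le perfect_matchings_eq_image_matching_of)
  finally show ?thesis .
qed

end

theorem theorem2:
  fixes I :: "('c, 'r, 't) cbctt" and \<tau>0 :: "('c, 'r) timetable" and p :: nat
  assumes "wf_inst I"
    and "p \<in> periods I"
    and "feasible I \<tau>0"
    and "card (courses_at I \<tau>0 p) = card (rooms I)"
  shows "perfect_matchings (courses_at I \<tau>0 p) (rooms I)
           = matching_of I \<tau>0 p ` room_nbhd I \<tau>0 p
       \<and> (\<forall>\<tau> \<in> room_nbhd I \<tau>0 p.
            max_min_fair I (room_nbhd I \<tau>0 p) \<tau> \<longleftrightarrow>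
            glbop_opt (perfect_matchings (courses_at I \<tau>0 p) (rooms I))
                      (room_weight I \<tau>0 p) (matching_of I \<tau>0 p \<tau>))"
proof -
  interpret period_room_assignment I \<tau>0 p
    using assms(1,3) by unfold_locales
  show ?thesis
    using perfect_matchings_eq_image_matching_of max_min_fair_iff_glbop_opt assms(4) by blast
qed

end
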